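(* Let $M$ be a matroid flock of rank $d$ on a finite set $E$, and let $g=g^M$. Then (1) $g(\alpha)+g(\beta)\ge g(\alpha\vee\beta)+g(\alpha\wedge\beta)$ for all $\alpha,\beta\in\mathbb{Z}^E$; and (2) $g(\alpha+\mathbf{1})=g(\alpha)+d$ for all $\alpha\in\mathbb{Z}^E$.
   Context: $\alpha\vee\beta$ and $\alpha\wedge\beta$ are the coordinatewise maximum and minimum. $e_I:=\sum_{i\in I}e_i$ ($e_i$ unit vectors), $\mathbf{1}:=e_E$. A matroid flock of rank $d$ on $E$ is a map $M$ assigning to each $\alpha\in\mathbb{Z}^E$ a matroid $M_\alpha$ on $E$ of rank $d$ with (MF1) $M_\alpha/i=M_{\alpha+e_i}\setminus i$ for all $\alpha$, $i$ (contraction, deletion); and (MF2) $M_\alpha=M_{\alpha+\mathbf{1}}$. With $r_\alpha$ the rank function of $M_\alpha$, $g^M$ is the unique function $g:\mathbb{Z}^E\to\mathbb{Z}$ with $g(0)=0$ and $g(\alpha+e_I)=g(\alpha)+r_\alpha(I)$ for all $\alpha\in\mathbb{Z}^E$, $I\subseteq E$. *)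

theory Defs
  imports Main
begin

definition matroid :: "'a set \<Rightarrow> 'a set set \<Rightarrow> bool" where
  "matroid E Ind \<longleftrightarrow> finite E \<and> Ind \<subseteq> Pow E \<and> {} \<in> Ind
     \<and> (\<forall>I J. J \<in> Ind \<longrightarrow> I \<subseteq> J \<longrightarrow> I \<in> Ind)
     \<and> (\<forall>I J. I \<in> Ind \<longrightarrow> J \<in> Ind \<longrightarrow> card I < card J \<longrightarrow>
            (\<exists>x \<in> J - I. insert x I \<in> Ind))"

definition mrank :: "'a set set \<Rightarrow> 'a set \<Rightarrow> nat" where
  "mrank Ind X = Max (card ` {I \<in> Ind. I \<subseteq> X})"

definition mdelete :: "'a set set \<Rightarrow> 'a \<Rightarrow> 'a set set" where
  "mdelete Ind i = {I \<in> Ind. i \<notin> I}"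

definition mcontract :: "'a set set \<Rightarrow> 'a \<Rightarrow> 'a set set" where
  "mcontract Ind i = (if {i} \<in> Ind then {I. i \<notin> I \<and> insert i I \<in> Ind} else mdelete Ind i)"

definition shift :: "('a \<Rightarrow> int) \<Rightarrow> 'a set \<Rightarrow> ('a \<Rightarrow> int)" where
  "shift \<alpha> I = (\<lambda>x. \<alpha> x + (if x \<in> I then 1 else 0))"

text \<open>Matroid flock of rank d on the finite ground set E = UNIV of a finite type.\<close>
definition matroid_flock :: "nat \<Rightarrow> (('a::finite \<Rightarrow> int) \<Rightarrow> 'a set set) \<Rightarrow> bool" where
  "matroid_flock d M \<longleftrightarrow>
     (\<forall>\<alpha>. matroid UNIV (M \<alpha>) \<and> mrank (M \<alpha>) UNIV = d)
     \<and> (\<forall>\<alpha> i. mcontract (M \<alpha>) i = mdelete (M (shift \<alpha> {i})) i)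
     \<and> (\<forall>\<alpha>. M \<alpha> = M (shift \<alpha> UNIV))"

definition gM :: "(('a::finite \<Rightarrow> int) \<Rightarrow> 'a set set) \<Rightarrow> ('a \<Rightarrow> int) \<Rightarrow> int" where
  "gM M = (THE g. g (\<lambda>_. 0) = 0 \<and>
              (\<forall>\<alpha> I. g (shift \<alpha> I) = g \<alpha> + int (mrank (M \<alpha>) I)))"

end

theory Submission
  imports Defs
begin

text \<open>
  Think of \<open>r\<^sub>\<alpha>(I)\<close> as the weight of the step \<open>\<alpha> \<rightarrow> \<alpha> + e\<^sub>I\<close> of the lattice \<open>\<int>\<^sup>E\<close>.
  Axiom (MF1) together with the rank formula \<open>r\<^sub>M(Y + i) = r\<^sub>M(i) + r\<^sub>M\<^sub>/\<^sub>i(Y)\<close> for contractions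
  makes these weights a cocycle: \<open>r\<^sub>\<alpha>(A) + r\<^sub>\<alpha>\<^sub>+\<^sub>e\<^sub>A(B) = r\<^sub>\<alpha>(A \<union> B) + r\<^sub>\<alpha>\<^sub>+\<^sub>e\<^sub>A\<^sub>\<union>\<^sub>B(A \<inter> B)\<close>,
  both sides being staircases from \<open>\<alpha>\<close> to \<open>\<alpha> + e\<^sub>A + e\<^sub>B\<close>. Hence summing weights along monotone
  staircases gives a well-defined potential \<open>g\<close>, unique because any two points lie above a common
  point. Part (2) is then just \<open>r\<^sub>\<alpha>(E) = d\<close>. For part (1) it suffices to
  check submodularity on unit squares, where it reads \<open>r\<^sub>\<alpha>{i,j} \<le> r\<^sub>\<alpha>{i} + r\<^sub>\<alpha>{j}\<close>;
  two inductions on the size of a box propagate it to all of \<open>\<int>\<^sup>E\<close>.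
\<close>

section \<open>Ranks of matroids\<close>

lemma matroid_empty_indep: "matroid E Ind \<Longrightarrow> {} \<in> Ind"
  unfolding matroid_def by blast

lemma matroid_indep_subset: "matroid E Ind \<Longrightarrow> J \<in> Ind \<Longrightarrow> I \<subseteq> J \<Longrightarrow> I \<in> Ind"
  unfolding matroid_def by blast

lemma matroid_augment:
  "matroid E Ind \<Longrightarrow> I \<in> Ind \<Longrightarrow> J \<in> Ind \<Longrightarrow> card I < card J \<Longrightarrow> \<exists>x\<in>J - I. insert x I \<in> Ind"
  unfolding matroid_def by blast

lemma card_le_mrank:
  "{} \<in> F \<Longrightarrow> I \<in> F \<Longrightarrow> I \<subseteq> X \<Longrightarrow> card I \<le> mrank F (X :: 'a::finite set)"
  unfolding mrank_def by (rule Max_ge) auto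

lemma mrank_attained:
  assumes "{} \<in> F"
  shows "\<exists>I\<in>F. I \<subseteq> (X :: 'a::finite set) \<and> card I = mrank F X"
proof -
  have "mrank F X \<in> card ` {I \<in> F. I \<subseteq> X}"
    unfolding mrank_def using assms by (intro Max_in) auto
  then show ?thesis by auto
qed

lemma mrank_eqI:
  "I \<in> F \<Longrightarrow> I \<subseteq> X \<Longrightarrow> (\<And>J. J \<in> F \<Longrightarrow> J \<subseteq> X \<Longrightarrow> card J \<le> card I)
     \<Longrightarrow> mrank F (X :: 'a::finite set) = card I"
  unfolding mrank_def by (intro Max_eqI) auto

lemma mrank_empty: "{} \<in> F \<Longrightarrow> mrank F ({} :: 'a::finite set) = 0"
  using mrank_eqI[of "{}" F "{}"] by simp

lemma mrank_Un_le:
  fixes Ind :: "'a::finite set set"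
  assumes m: "matroid UNIV Ind"
  shows "mrank Ind (A \<union> B) \<le> mrank Ind A + mrank Ind B"
proof -
  have e: "{} \<in> Ind" by (rule matroid_empty_indep[OF m])
  obtain I where I: "I \<in> Ind" "I \<subseteq> A \<union> B" "card I = mrank Ind (A \<union> B)"
    using mrank_attained[OF e] by blast
  have "I = (I \<inter> A) \<union> (I \<inter> B)" using I(2) by blast
  then have "card I \<le> card (I \<inter> A) + card (I \<inter> B)" by (metis card_Un_le)
  also have "\<dots> \<le> mrank Ind A + mrank Ind B"
    using matroid_indep_subset[OF m I(1)] by (intro add_mono card_le_mrank[OF e]) auto
  finally show ?thesis using I(3) by simp
qed

lemma mrank_mdelete: "i \<notin> Y \<Longrightarrow> mrank (mdelete Ind i) Y = mrank Ind Y"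
proof -
  assume "i \<notin> Y"
  then have "{I \<in> mdelete Ind i. I \<subseteq> Y} = {I \<in> Ind. I \<subseteq> Y}" by (auto simp: mdelete_def)
  then show ?thesis by (simp add: mrank_def)
qed

lemma mrank_attained_containing:
  fixes Ind :: "'a::finite set set"
  assumes m: "matroid UNIV Ind" and i: "{i} \<in> Ind" "i \<in> X"
  shows "\<exists>C\<in>Ind. i \<in> C \<and> C \<subseteq> X \<and> card C = mrank Ind X"
proof -
  have e: "{} \<in> Ind" by (rule matroid_empty_indep[OF m])
  define F where "F = {C \<in> Ind. i \<in> C \<and> C \<subseteq> X}"
  have "Max (card ` F) \<in> card ` F" using i by (intro Max_in) (auto simp: F_def)
  then obtain C where C: "C \<in> F" "card C = Max (card ` F)" by auto
  obtain B where B: "B \<in> Ind" "B \<subseteq> X" "card B = mrank Ind X"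
    using mrank_attained[OF e] by blast
  have "card B \<le> card C"
  proof (rule ccontr)
    assume "\<not> card B \<le> card C"
    then obtain x where x: "x \<in> B - C" "insert x C \<in> Ind"
      using matroid_augment[OF m, of C B] C B by (auto simp: F_def)
    then have "insert x C \<in> F" using C B by (auto simp: F_def)
    then have "card (insert x C) \<le> card C" using C by simp
    then show False using x by simp
  qed
  moreover have "card C \<le> mrank Ind X" using C by (intro card_le_mrank[OF e]) (auto simp: F_def)
  ultimately show ?thesis using C B by (auto simp: F_def)
qed

lemma mrank_mcontract:
  fixes Ind :: "'a::finite set set"
  assumes m: "matroid UNIV Ind" and iY: "i \<notin> Y"
  shows "mrank Ind (insert i Y) = mrank Ind {i} + mrank (mcontract Ind i) Y"
proof (cases "{i} \<in> Ind")
  case True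
  define C where "C = {I. i \<notin> I \<and> insert i I \<in> Ind}"
  have mC: "mcontract Ind i = C" using True by (simp add: mcontract_def C_def)
  have eC: "{} \<in> C" using True by (simp add: C_def)
  have "card J \<le> 1" if "J \<subseteq> {i}" for J using card_mono[OF _ that] by simp
  then have r1: "mrank Ind {i} = 1" using mrank_eqI[OF True, of "{i}"] by simp
  obtain J where J: "J \<in> C" "J \<subseteq> Y" "card J = mrank C Y"
    using mrank_attained[OF eC] by blast
  have "card (insert i J) \<le> mrank Ind (insert i Y)"
    using J matroid_empty_indep[OF m] by (intro card_le_mrank) (auto simp: C_def)
  then have le: "mrank C Y + 1 \<le> mrank Ind (insert i Y)" using J by (simp add: C_def)
  obtain D where D: "D \<in> Ind" "i \<in> D" "D \<subseteq> insert i Y" "card D = mrank Ind (insert i Y)"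
    using mrank_attained_containing[OF m True] by blast
  have "D - {i} \<in> C" "D - {i} \<subseteq> Y" using D by (auto simp: C_def insert_absorb)
  then have "card (D - {i}) \<le> mrank C Y" by (rule card_le_mrank[OF eC])
  then have "mrank Ind (insert i Y) \<le> mrank C Y + 1" using D by simp
  then show ?thesis using le r1 mC by simp
next
  case False
  have noi: "i \<notin> I" if "I \<in> Ind" for I
    using matroid_indep_subset[OF m that, of "{i}"] False by auto
  have "mrank Ind {i} = card ({} :: 'a set)"
    using noi by (intro mrank_eqI[OF matroid_empty_indep[OF m]]) (auto simp: subset_singleton_iff)
  moreover have "{I \<in> Ind. I \<subseteq> insert i Y} = {I \<in> Ind. I \<subseteq> Y}" using noi by blast
  then have "mrank Ind (insert i Y) = mrank Ind Y" by (simp add: mrank_def)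
  ultimately show ?thesis using False iY by (simp add: mcontract_def mrank_mdelete)
qed

section \<open>Staircase steps in the lattice\<close>

lemma shift_empty [simp]: "shift \<alpha> {} = \<alpha>"
  by (simp add: shift_def)

lemma shift_shift: "A \<inter> B = {} \<Longrightarrow> shift (shift \<alpha> A) B = shift \<alpha> (A \<union> B)"
  by (auto simp: shift_def fun_eq_iff)

lemma le_shift: "\<alpha> \<le> shift \<alpha> I"
  by (simp add: le_fun_def shift_def)

definition lt_set :: "('a \<Rightarrow> int) \<Rightarrow> ('a \<Rightarrow> int) \<Rightarrow> 'a set" where
  "lt_set \<alpha> \<beta> = {x. \<alpha> x < \<beta> x}"

definition gap :: "('a::finite \<Rightarrow> int) \<Rightarrow> ('a \<Rightarrow> int) \<Rightarrow> nat" where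
  "gap \<alpha> \<beta> = (\<Sum>x\<in>UNIV. nat (\<beta> x - \<alpha> x))"

lemma gap_shift_less: "I \<noteq> {} \<Longrightarrow> I \<subseteq> lt_set \<alpha> \<beta> \<Longrightarrow> gap (shift \<alpha> I) \<beta> < gap \<alpha> \<beta>"
  unfolding gap_def
proof (rule sum_strict_mono_ex1)
  assume "I \<noteq> {}" "I \<subseteq> lt_set \<alpha> \<beta>"
  then obtain a where "a \<in> I" "\<alpha> a < \<beta> a" by (auto simp: lt_set_def)
  then show "\<exists>a\<in>UNIV. nat (\<beta> a - shift \<alpha> I a) < nat (\<beta> a - \<alpha> a)" by (auto simp: shift_def)
qed (auto simp: shift_def)

lemma gap_decrement: "(\<alpha> :: 'a::finite \<Rightarrow> int) j < \<beta> j \<Longrightarrow> gap \<alpha> (\<beta>(j := \<beta> j - 1)) < gap \<alpha> \<beta>"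
  unfolding gap_def by (rule sum_strict_mono_ex1) auto

lemma lt_set_empty_iff_eq: "\<alpha> \<le> \<beta> \<Longrightarrow> lt_set \<alpha> \<beta> = {} \<longleftrightarrow> \<alpha> = \<beta>"
  by (auto simp: lt_set_def le_fun_def fun_eq_iff order.order_iff_strict)

lemma shift_lt_set_le: "\<alpha> \<le> \<beta> \<Longrightarrow> shift \<alpha> (lt_set \<alpha> \<beta>) \<le> \<beta>"
  by (auto simp: le_fun_def shift_def lt_set_def)

lemma shift_induct_le [consumes 1, case_names top step]:
  fixes \<alpha> \<beta> :: "'a::finite \<Rightarrow> int"
  assumes "\<alpha> \<le> \<beta>"
    and top: "P \<beta>"
    and step: "\<And>\<alpha>. \<alpha> \<le> \<beta> \<Longrightarrow> \<alpha> \<noteq> \<beta> \<Longrightarrow> P (shift \<alpha> (lt_set \<alpha> \<beta>)) \<Longrightarrow> P \<alpha>"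
  shows "P \<alpha>"
  using assms(1)
proof (induction "gap \<alpha> \<beta>" arbitrary: \<alpha> rule: less_induct)
  case less
  show ?case
  proof (cases "\<alpha> = \<beta>")
    case True
    then show ?thesis using top by simp
  next
    case False
    then have "gap (shift \<alpha> (lt_set \<alpha> \<beta>)) \<beta> < gap \<alpha> \<beta>"
      using less.prems lt_set_empty_iff_eq by (intro gap_shift_less) auto
    with False less show ?thesis
      by (metis step shift_lt_set_le)
  qed
qed

lemma shift_invariant_const:
  fixes h :: "('a::finite \<Rightarrow> int) \<Rightarrow> int"
  assumes inv: "\<And>\<alpha> I. h (shift \<alpha> I) = h \<alpha>"
  shows "h \<gamma> = h \<delta>"
proof -
  have up: "h \<alpha> = h \<beta>" if "\<alpha> \<le> \<beta>" for \<alpha> \<beta>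
    using that by (induction rule: shift_induct_le) (auto simp: inv)
  have "h (inf \<gamma> \<delta>) = h \<gamma>" "h (inf \<gamma> \<delta>) = h \<delta>" by (auto intro: up)
  then show ?thesis by simp
qed

section \<open>Potentials of staircase cocycles\<close>

function path_sum ::
  "(('a::finite \<Rightarrow> int) \<Rightarrow> 'a set \<Rightarrow> int) \<Rightarrow> ('a \<Rightarrow> int) \<Rightarrow> ('a \<Rightarrow> int) \<Rightarrow> int" where
  "path_sum r \<alpha> \<beta> =
     (if lt_set \<alpha> \<beta> = {} then 0 else r \<alpha> (lt_set \<alpha> \<beta>) + path_sum r (shift \<alpha> (lt_set \<alpha> \<beta>)) \<beta>)"
  by auto
termination by (relation "measure (\<lambda>(r, \<alpha>, \<beta>). gap \<alpha> \<beta>)") (auto intro: gap_shift_less)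

declare path_sum.simps [simp del]

lemma path_sum_refl: "path_sum r \<alpha> \<alpha> = 0"
  by (subst path_sum.simps) (simp add: lt_set_def)

definition potential :: "(('a::finite \<Rightarrow> int) \<Rightarrow> 'a set \<Rightarrow> int) \<Rightarrow> ('a \<Rightarrow> int) \<Rightarrow> int" where
  "potential r \<gamma> = path_sum r (inf \<gamma> (\<lambda>_. 0)) \<gamma> - path_sum r (inf \<gamma> (\<lambda>_. 0)) (\<lambda>_. 0)"

context
  fixes r :: "('a::finite \<Rightarrow> int) \<Rightarrow> 'a set \<Rightarrow> int"
  assumes r_empty: "\<And>\<alpha>. r \<alpha> {} = 0"
    and r_insert: "\<And>\<alpha> i Y. i \<notin> Y \<Longrightarrow> r \<alpha> (insert i Y) = r \<alpha> {i} + r (shift \<alpha> {i}) Y"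
begin

lemma r_Un_disjoint: "X \<inter> Y = {} \<Longrightarrow> r \<alpha> (X \<union> Y) = r \<alpha> X + r (shift \<alpha> X) Y"
proof (induction X arbitrary: \<alpha> Y rule: finite_induct[OF finite])
  case 1
  then show ?case by (simp add: r_empty)
next
  case (2 i X)
  have "r \<alpha> (insert i X \<union> Y) = r \<alpha> {i} + r (shift \<alpha> {i}) (X \<union> Y)"
    using 2 r_insert[of i "X \<union> Y" \<alpha>] by simp
  also have "r (shift \<alpha> {i}) (X \<union> Y) = r (shift \<alpha> {i}) X + r (shift \<alpha> (insert i X)) Y"
    using 2 by (simp add: shift_shift)
  also have "r \<alpha> {i} + (r (shift \<alpha> {i}) X + r (shift \<alpha> (insert i X)) Y)
      = r \<alpha> (insert i X) + r (shift \<alpha> (insert i X)) Y"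
    using 2 r_insert[of i X \<alpha>] by simp
  finally show ?case .
qed

lemma r_Un: "r \<alpha> (A \<union> B) + r (shift \<alpha> (A \<union> B)) (A \<inter> B) = r \<alpha> A + r (shift \<alpha> A) B"
proof -
  have "r \<alpha> (A \<union> B) = r \<alpha> A + r (shift \<alpha> A) (B - A)"
    using r_Un_disjoint[of A "B - A" \<alpha>] by (simp add: Un_Diff_cancel)
  moreover have "r (shift \<alpha> A) B = r (shift \<alpha> A) (B - A) + r (shift \<alpha> (A \<union> B)) (A \<inter> B)"
  proof -
    have "B = (B - A) \<union> (A \<inter> B)" "(B - A) \<inter> (A \<inter> B) = {}" by blast+
    moreover have "shift (shift \<alpha> A) (B - A) = shift \<alpha> (A \<union> B)"
      by (simp add: shift_shift Un_Diff_cancel)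
    ultimately show ?thesis using r_Un_disjoint[of "B - A" "A \<inter> B" "shift \<alpha> A"] by metis
  qed
  ultimately show ?thesis by simp
qed

lemma path_sum_unfold: "path_sum r \<alpha> \<beta> = r \<alpha> (lt_set \<alpha> \<beta>) + path_sum r (shift \<alpha> (lt_set \<alpha> \<beta>)) \<beta>"
  by (cases "lt_set \<alpha> \<beta> = {}") (simp add: r_empty, subst path_sum.simps, simp)

text \<open>The recursion of \<open>path_sum\<close> raises all coordinates below \<open>\<beta>\<close> at once; by the
  cocycle identity any smaller first step gives the same sum.\<close>
lemma path_sum_step: "I \<subseteq> lt_set \<alpha> \<beta> \<Longrightarrow> path_sum r \<alpha> \<beta> = r \<alpha> I + path_sum r (shift \<alpha> I) \<beta>"
proof (induction "gap \<alpha> \<beta>" arbitrary: \<alpha> I rule: less_induct)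
  case less
  show ?case
  proof (cases "I = {}")
    case True
    then show ?thesis by (simp add: r_empty)
  next
    case False
    define S where "S = lt_set \<alpha> \<beta>"
    define T where "T = lt_set (shift \<alpha> I) \<beta>"
    have SIT: "S = I \<union> T" using less.prems by (auto simp: S_def T_def lt_set_def shift_def)
    have IT: "I \<inter> T \<subseteq> lt_set (shift \<alpha> S) \<beta>" using less.prems
      by (auto simp: S_def T_def lt_set_def shift_def)
    have sh: "shift (shift \<alpha> S) (I \<inter> T) = shift (shift \<alpha> I) T"
      using SIT by (auto simp: shift_def fun_eq_iff)
    have "gap (shift \<alpha> S) \<beta> < gap \<alpha> \<beta>"
      using False less.prems by (intro gap_shift_less) (auto simp: S_def)
    then have "path_sum r (shift \<alpha> S) \<beta> = r (shift \<alpha> S) (I \<inter> T) + path_sum r (shift (shift \<alpha> I) T) \<beta>"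
      using less.hyps[OF _ IT] sh by simp
    then have "path_sum r \<alpha> \<beta> = r \<alpha> S + r (shift \<alpha> S) (I \<inter> T) + path_sum r (shift (shift \<alpha> I) T) \<beta>"
      using path_sum_unfold[of \<alpha> \<beta>] by (simp add: S_def)
    also have "r \<alpha> S + r (shift \<alpha> S) (I \<inter> T) = r \<alpha> I + r (shift \<alpha> I) T"
      using r_Un[of \<alpha> I T] SIT by simp
    finally show ?thesis using path_sum_unfold[of "shift \<alpha> I" \<beta>] by (simp add: T_def)
  qed
qed

lemma path_sum_trans: "\<alpha> \<le> \<beta> \<Longrightarrow> \<beta> \<le> \<gamma> \<Longrightarrow> path_sum r \<alpha> \<gamma> = path_sum r \<alpha> \<beta> + path_sum r \<beta> \<gamma>"
proof (induction rule: shift_induct_le)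
  case top
  then show ?case by (simp add: path_sum_refl)
next
  case (step \<alpha>)
  have "lt_set \<alpha> \<beta> \<subseteq> lt_set \<alpha> \<gamma>"
    using step.prems by (auto simp: lt_set_def le_fun_def intro: less_le_trans)
  then show ?case
    using step path_sum_unfold[of \<alpha> \<beta>] path_sum_step[of "lt_set \<alpha> \<beta>" \<alpha> \<gamma>] by simp
qed

lemma potential_eq:
  assumes "\<mu> \<le> \<gamma>" "\<mu> \<le> (\<lambda>_. 0)"
  shows "potential r \<gamma> = path_sum r \<mu> \<gamma> - path_sum r \<mu> (\<lambda>_. 0)"
proof -
  let ?m = "inf \<gamma> (\<lambda>_. 0)"
  have "\<mu> \<le> ?m" using assms by simp
  then have "path_sum r \<mu> \<gamma> = path_sum r \<mu> ?m + path_sum r ?m \<gamma>"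
    and "path_sum r \<mu> (\<lambda>_. 0) = path_sum r \<mu> ?m + path_sum r ?m (\<lambda>_. 0)"
    by (simp_all add: path_sum_trans)
  then show ?thesis by (simp add: potential_def)
qed

lemma potential_zero: "potential r (\<lambda>_. 0) = 0"
  by (simp add: potential_def)

lemma potential_shift: "potential r (shift \<gamma> I) = potential r \<gamma> + r \<gamma> I"
proof -
  let ?m = "inf \<gamma> (\<lambda>_. 0)"
  have "path_sum r \<gamma> (shift \<gamma> I) = r \<gamma> I"
    using path_sum_step[of I \<gamma> "shift \<gamma> I"] by (auto simp: lt_set_def shift_def path_sum_refl)
  moreover have "path_sum r ?m (shift \<gamma> I) = path_sum r ?m \<gamma> + path_sum r \<gamma> (shift \<gamma> I)"
    by (rule path_sum_trans) (simp_all add: le_shift)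
  moreover have "?m \<le> shift \<gamma> I" using le_shift[of \<gamma> I] by (simp add: le_infI1)
  ultimately show ?thesis
    using potential_eq[of ?m "shift \<gamma> I"] by (simp add: potential_def)
qed

end

section \<open>Submodularity from unit squares\<close>

context
  fixes g :: "('a::finite \<Rightarrow> int) \<Rightarrow> int"
  assumes square: "\<And>\<alpha> i j. i \<noteq> j \<Longrightarrow> g (shift \<alpha> {i, j}) + g \<alpha> \<le> g (shift \<alpha> {i}) + g (shift \<alpha> {j})"
begin

lemma submodular_strip:
  "\<alpha> \<le> \<beta> \<Longrightarrow> \<beta> i = \<alpha> i \<Longrightarrow> g (shift \<beta> {i}) + g \<alpha> \<le> g (shift \<alpha> {i}) + g \<beta>"
proof (induction "gap \<alpha> \<beta>" arbitrary: \<beta> rule: less_induct)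
  case less
  show ?case
  proof (cases "\<alpha> = \<beta>")
    case False
    then obtain j where j: "\<alpha> j < \<beta> j"
      using less.prems by (auto simp: le_fun_def fun_eq_iff order.order_iff_strict)
    define \<beta>' where "\<beta>' = \<beta>(j := \<beta> j - 1)"
    have ij: "i \<noteq> j" using j less.prems by auto
    have "g (shift \<beta>' {i}) + g \<alpha> \<le> g (shift \<alpha> {i}) + g \<beta>'"
      using less.prems j ij
      by (intro less.hyps gap_decrement[of \<alpha> j \<beta>, folded \<beta>'_def]) (auto simp: \<beta>'_def le_fun_def)
    moreover have "shift \<beta>' {j} = \<beta>" "shift \<beta>' {i, j} = shift \<beta> {i}"
      using ij by (auto simp: shift_def \<beta>'_def fun_eq_iff)
    ultimately show ?thesis using square[OF ij, of \<beta>'] by simp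
  qed simp
qed

lemma submodular_box:
  "\<alpha> \<le> \<beta> \<Longrightarrow> \<alpha> \<le> \<gamma> \<Longrightarrow> (\<forall>x. \<beta> x = \<alpha> x \<or> \<gamma> x = \<alpha> x) \<Longrightarrow> g (sup \<beta> \<gamma>) + g \<alpha> \<le> g \<beta> + g \<gamma>"
proof (induction "gap \<alpha> \<beta>" arbitrary: \<beta> rule: less_induct)
  case less
  show ?case
  proof (cases "\<alpha> = \<beta>")
    case True
    then show ?thesis using less.prems by (simp add: sup.absorb2)
  next
    case False
    then obtain i where i: "\<alpha> i < \<beta> i"
      using less.prems by (auto simp: le_fun_def fun_eq_iff order.order_iff_strict)
    define \<beta>' where "\<beta>' = \<beta>(i := \<beta> i - 1)"
    have \<gamma>i: "\<gamma> i = \<alpha> i" using i less.prems by force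
    have "g (sup \<beta>' \<gamma>) + g \<alpha> \<le> g \<beta>' + g \<gamma>"
      using less.prems i \<gamma>i
      by (intro less.hyps gap_decrement[of \<alpha> i \<beta>, folded \<beta>'_def]) (auto simp: \<beta>'_def le_fun_def)
    moreover have "g (shift (sup \<beta>' \<gamma>) {i}) + g \<beta>' \<le> g (shift \<beta>' {i}) + g (sup \<beta>' \<gamma>)"
      using i \<gamma>i by (intro submodular_strip) (auto simp: \<beta>'_def sup_max)
    moreover have "shift \<beta>' {i} = \<beta>" "shift (sup \<beta>' \<gamma>) {i} = sup \<beta> \<gamma>"
      using i \<gamma>i by (auto simp: shift_def \<beta>'_def fun_eq_iff sup_max)
    ultimately show ?thesis by simp
  qed
qed

lemma submodular: "g (sup \<alpha> \<beta>) + g (inf \<alpha> \<beta>) \<le> g \<alpha> + g \<beta>"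
  by (rule submodular_box) (auto simp: inf_min min_def)

end

section \<open>The function \<open>g\<^sup>M\<close> of a matroid flock\<close>

context
  fixes M :: "('a::finite \<Rightarrow> int) \<Rightarrow> 'a set set" and d :: nat
  assumes flock: "matroid_flock d M"
begin

lemma flock_matroid: "matroid UNIV (M \<alpha>)"
  using flock unfolding matroid_flock_def by blast

definition flock_rank :: "('a \<Rightarrow> int) \<Rightarrow> 'a set \<Rightarrow> int" where
  "flock_rank \<alpha> I = int (mrank (M \<alpha>) I)"

text \<open>Unlike \<open>flock_rank_def\<close>, this does not rewrite the unapplied constant in
  \<open>potential flock_rank\<close>.\<close>
lemma flock_rank_apply: "flock_rank \<alpha> I = int (mrank (M \<alpha>) I)"
  by (simp add: flock_rank_def)

lemma flock_rank_empty: "flock_rank \<alpha> {} = 0"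
  by (simp add: flock_rank_def mrank_empty matroid_empty_indep[OF flock_matroid])

lemma flock_rank_insert:
  assumes "i \<notin> Y"
  shows "flock_rank \<alpha> (insert i Y) = flock_rank \<alpha> {i} + flock_rank (shift \<alpha> {i}) Y"
proof -
  have "mcontract (M \<alpha>) i = mdelete (M (shift \<alpha> {i})) i"
    using flock unfolding matroid_flock_def by blast
  then show ?thesis
    using mrank_mcontract[OF flock_matroid assms] mrank_mdelete[OF assms] by (simp add: flock_rank_def)
qed

lemma potential_flock_rank_shift:
  "potential flock_rank (shift \<alpha> I) = potential flock_rank \<alpha> + int (mrank (M \<alpha>) I)"
proof -
  have "potential flock_rank (shift \<alpha> I) = potential flock_rank \<alpha> + flock_rank \<alpha> I"
    using flock_rank_empty flock_rank_insert by (rule potential_shift)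
  then show ?thesis by (simp only: flock_rank_apply[of \<alpha> I])
qed

lemma gM_eq_potential: "gM M = potential flock_rank"
proof -
  let ?P = "\<lambda>g. g (\<lambda>_. 0) = 0 \<and> (\<forall>\<alpha> I. g (shift \<alpha> I) = g \<alpha> + int (mrank (M \<alpha>) I))"
  have "potential flock_rank (\<lambda>_. 0) = 0"
    using flock_rank_empty flock_rank_insert by (rule potential_zero)
  then have P: "?P (potential flock_rank)" by (simp add: potential_flock_rank_shift)
  have unique: "g = potential flock_rank" if "?P g" for g
  proof
    fix \<gamma>
    have "g \<gamma> - potential flock_rank \<gamma> = g (\<lambda>_. 0) - potential flock_rank (\<lambda>_. 0)"
      by (rule shift_invariant_const[where h = "\<lambda>\<alpha>. g \<alpha> - potential flock_rank \<alpha>"]) (use that P in simp)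
    then show "g \<gamma> = potential flock_rank \<gamma>" using that P by simp
  qed
  show ?thesis unfolding gM_def by (rule the_equality[where P = ?P, OF P unique])
qed

lemma gM_shift: "gM M (shift \<alpha> I) = gM M \<alpha> + int (mrank (M \<alpha>) I)"
  by (simp add: gM_eq_potential potential_flock_rank_shift)

end

theorem mainTheorem12:
  fixes M :: "('a::finite \<Rightarrow> int) \<Rightarrow> 'a set set" and d :: nat
  assumes "matroid_flock d M"
  shows "(\<forall>\<alpha> \<beta>. gM M \<alpha> + gM M \<beta> \<ge>
            gM M (\<lambda>x. max (\<alpha> x) (\<beta> x)) + gM M (\<lambda>x. min (\<alpha> x) (\<beta> x)))
       \<and> (\<forall>\<alpha>. gM M (shift \<alpha> UNIV) = gM M \<alpha> + int d)"
proof (intro conjI allI)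
  have square: "gM M (shift \<alpha> {i, j}) + gM M \<alpha> \<le> gM M (shift \<alpha> {i}) + gM M (shift \<alpha> {j})" for \<alpha> i j
    using mrank_Un_le[OF flock_matroid[OF assms], of \<alpha> "{i}" "{j}"]
    by (simp add: gM_shift[OF assms] insert_is_Un[of i "{j}"])
  fix \<alpha> \<beta> :: "'a \<Rightarrow> int"
  show "gM M (\<lambda>x. max (\<alpha> x) (\<beta> x)) + gM M (\<lambda>x. min (\<alpha> x) (\<beta> x)) \<le> gM M \<alpha> + gM M \<beta>"
    using submodular[of "gM M", OF square] by (simp add: sup_fun_def inf_fun_def sup_max inf_min)
next
  fix \<alpha> :: "'a \<Rightarrow> int"
  show "gM M (shift \<alpha> UNIV) = gM M \<alpha> + int d"
    using assms by (simp add: gM_shift matroid_flock_def)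
qed

end
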